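(* Let $p\in(0,1)$ and let $(\lambda_n)_{n\ge1}$ be a sequence with $\lambda_1=1$ and $0<\lambda_n\le\lambda_{n-1}$ for all $n>1$. Let $r_1,r_2,\dots$ be $\{0,1\}$-valued random variables with $\Pr(r_1=1)=p$ and, for every $n\ge2$, $\Pr(r_n=1\mid r_1,\dots,r_{n-1})=\lambda_n p+(1-\lambda_n)\bar p_{n-1}$, where $\bar p_m=\frac1m\sum_{i=1}^m r_i$. Define $\hat r_1=r_1$, $\hat r_i=\frac{r_i-(1-\lambda_i)\bar p_{i-1}}{\lambda_i}$ for $i\ge2$, and for positive weights $(\omega_i)$ let $\hat p_n=\frac{\sum_{i=1}^n\omega_i\hat r_i}{\sum_{i=1}^n\omega_i}$. (a) If $\omega_i=1$ for all $i$ and $\sum_{i=1}^n\lambda_i^{-2}=o(n^2)$ as $n\to\infty$, then $\hat p_n$ is a consistent estimator of $p$, i.e. $\Pr(|\hat p_n-p|>\epsilon)\to0$ for every $\epsilon>0$. (b) If $\omega_i=\lambda_i$ for all $i$ and $n=o\big((\sum_{i=1}^n\lambda_i)^2\big)$ as $n\to\infty$, then $\hat p_n$ is a consistent estimator of $p$. *)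

theory Defs
  imports "HOL-Probability.Probability" "HOL-Library.Landau_Symbols"
begin

text \<open>Random variables are indexed from 1: r 1, r 2, ...\<close>

definition pbar :: "(nat \<Rightarrow> 'a \<Rightarrow> real) \<Rightarrow> nat \<Rightarrow> 'a \<Rightarrow> real" where
  "pbar r m x = (\<Sum>i=1..m. r i x) / real m"

definition rhat :: "(nat \<Rightarrow> real) \<Rightarrow> (nat \<Rightarrow> 'a \<Rightarrow> real) \<Rightarrow> nat \<Rightarrow> 'a \<Rightarrow> real" where
  "rhat lam r i x = (if i = 1 then r 1 x
                     else (r i x - (1 - lam i) * pbar r (i - 1) x) / lam i)"

definition phat :: "(nat \<Rightarrow> real) \<Rightarrow> (nat \<Rightarrow> real) \<Rightarrow> (nat \<Rightarrow> 'a \<Rightarrow> real) \<Rightarrow> nat \<Rightarrow> 'a \<Rightarrow> real" where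
  "phat w lam r n x = (\<Sum>i=1..n. w i * rhat lam r i x) / (\<Sum>i=1..n. w i)"

definition consistent_estimator :: "'a measure \<Rightarrow> (nat \<Rightarrow> 'a \<Rightarrow> real) \<Rightarrow> real \<Rightarrow> bool" where
  "consistent_estimator M est p \<longleftrightarrow>
     (\<forall>\<epsilon>>0. (\<lambda>n. measure M {x \<in> space M. \<bar>est n x - p\<bar> > \<epsilon>}) \<longlonglongrightarrow> 0)"

end

theory Submission
  imports Defs
begin

text \<open>
  Let \<open>c\<^sub>n = \<lambda>\<^sub>n p + (1 - \<lambda>\<^sub>n) pbar (n - 1)\<close> be the conditional success probability of \<open>r\<^sub>n\<close>
  given \<open>r\<^sub>1, \<dots>, r\<^sub>n\<^sub>-\<^sub>1\<close>. The innovations \<open>e\<^sub>n = r\<^sub>n - c\<^sub>n\<close> are martingale differences bounded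
  by 1, and \<open>rhat\<^sub>i = p + e\<^sub>i / \<lambda>\<^sub>i\<close>, so \<open>phat\<^sub>n - p = (\<Sum>\<omega>\<^sub>i e\<^sub>i / \<lambda>\<^sub>i) / \<Sum>\<omega>\<^sub>i\<close>.
  Martingale differences are orthogonal in \<open>L\<^sup>2\<close>, hence
  \<open>E (phat\<^sub>n - p)\<^sup>2 \<le> \<Sum>(\<omega>\<^sub>i / \<lambda>\<^sub>i)\<^sup>2 / (\<Sum>\<omega>\<^sub>i)\<^sup>2\<close>, and each of the two growth conditions
  makes this bound tend to 0. Chebyshev's inequality turns mean-square convergence into
  convergence in probability.
\<close>

lemma integrable_square_sum:
  fixes d :: "'i \<Rightarrow> 'a \<Rightarrow> real"
  assumes "\<And>i j. i \<in> I \<Longrightarrow> j \<in> I \<Longrightarrow> integrable M (\<lambda>x. d i x * d j x)"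
  shows "integrable M (\<lambda>x. (\<Sum>i\<in>I. d i x)^2)"
  using assms by (simp add: power2_eq_square sum_product)

lemma integral_square_sum_orthogonal:
  fixes d :: "'i \<Rightarrow> 'a \<Rightarrow> real"
  assumes "finite I"
    and integrable: "\<And>i j. i \<in> I \<Longrightarrow> j \<in> I \<Longrightarrow> integrable M (\<lambda>x. d i x * d j x)"
    and orthogonal: "\<And>i j. i \<in> I \<Longrightarrow> j \<in> I \<Longrightarrow> i \<noteq> j \<Longrightarrow> (\<integral>x. d i x * d j x \<partial>M) = 0"
  shows "(\<integral>x. (\<Sum>i\<in>I. d i x)^2 \<partial>M) = (\<Sum>i\<in>I. \<integral>x. (d i x)^2 \<partial>M)"
proof -
  have "(\<integral>x. (\<Sum>i\<in>I. d i x)^2 \<partial>M) = (\<integral>x. (\<Sum>i\<in>I. \<Sum>j\<in>I. d i x * d j x) \<partial>M)"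
    by (simp add: power2_eq_square sum_product)
  also have "\<dots> = (\<Sum>i\<in>I. \<Sum>j\<in>I. \<integral>x. d i x * d j x \<partial>M)"
    using integrable by simp
  also have "\<dots> = (\<Sum>i\<in>I. \<integral>x. d i x * d i x \<partial>M)"
    using \<open>finite I\<close> orthogonal by (intro sum.cong refl) (auto simp: sum.remove intro!: sum.neutral)
  finally show ?thesis
    by (simp add: power2_eq_square)
qed

lemma integral_mult_eq_0_if_blockwise:
  fixes G Y :: "'a \<Rightarrow> real"
  assumes "finite As" and sets: "\<And>a. a \<in> As \<Longrightarrow> A a \<in> sets M"
    and disjoint: "disjoint_family_on A As" and cover: "space M \<subseteq> (\<Union>a\<in>As. A a)"
    and const: "\<And>a x y. a \<in> As \<Longrightarrow> x \<in> A a \<Longrightarrow> y \<in> A a \<Longrightarrow> G x = G y"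
    and "integrable M Y"
    and zero: "\<And>a. a \<in> As \<Longrightarrow> (\<integral>x. indicator (A a) x * Y x \<partial>M) = 0"
  shows "(\<integral>x. G x * Y x \<partial>M) = 0"
proof -
  define g where "g a = G (SOME x. x \<in> A a)" for a
  have "G x * Y x = (\<Sum>a\<in>As. g a * (indicator (A a) x * Y x))" if x: "x \<in> space M" for x
  proof -
    obtain a where a: "a \<in> As" "x \<in> A a"
      using cover x by blast
    have "(SOME y. y \<in> A a) \<in> A a"
      using a(2) by (rule someI)
    then have "g a = G x"
      unfolding g_def using const a by blast
    moreover have "indicator (A b) x = (0::real)" if "b \<in> As" "b \<noteq> a" for b
      using disjoint a that by (auto simp: disjoint_family_on_def split: split_indicator)
    ultimately show ?thesis
      using \<open>finite As\<close> a by (simp add: sum.remove)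
  qed
  then have "(\<integral>x. G x * Y x \<partial>M) = (\<integral>x. (\<Sum>a\<in>As. g a * (indicator (A a) x * Y x)) \<partial>M)"
    by (rule Bochner_Integration.integral_cong[OF refl])
  also have "\<dots> = (\<Sum>a\<in>As. g a * (\<integral>x. indicator (A a) x * Y x \<partial>M))"
    using sets \<open>integrable M Y\<close> by (simp add: integrable_real_mult_indicator mult.commute)
  also have "\<dots> = 0"
    using zero by simp
  finally show ?thesis .
qed

lemma (in finite_measure) consistent_estimator_if_mean_square:
  assumes [measurable]: "\<And>n. est n \<in> borel_measurable M"
    and integrable: "\<And>n. integrable M (\<lambda>x. (est n x - p)^2)"
    and mean_square: "(\<lambda>n. \<integral>x. (est n x - p)^2 \<partial>M) \<longlonglongrightarrow> 0"
  shows "consistent_estimator M est p"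
  unfolding consistent_estimator_def
proof (intro allI impI)
  fix \<epsilon> :: real
  assume "\<epsilon> > 0"
  have Chebyshev: "measure M {x \<in> space M. \<bar>est n x - p\<bar> > \<epsilon>}
      \<le> (\<integral>x. (est n x - p)^2 \<partial>M) / \<epsilon>^2" for n
  proof -
    have "measure M {x \<in> space M. \<bar>est n x - p\<bar> > \<epsilon>}
        \<le> measure M {x \<in> space M. \<bar>est n x - p\<bar> \<ge> \<epsilon>}"
      by (rule finite_measure_mono) (force, measurable)
    also have "\<dots> \<le> (\<integral>x. (est n x - p)^2 \<partial>M) / \<epsilon>^2"
      using integrable \<open>\<epsilon> > 0\<close> by (intro second_moment_method) simp_all
    finally show ?thesis .
  qed
  show "(\<lambda>n. measure M {x \<in> space M. \<bar>est n x - p\<bar> > \<epsilon>}) \<longlonglongrightarrow> 0"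
  proof (rule tendsto_sandwich[OF _ _ tendsto_const tendsto_divide_zero[OF mean_square]])
    show "\<forall>\<^sub>F n in sequentially. measure M {x \<in> space M. \<bar>est n x - p\<bar> > \<epsilon>}
        \<le> (\<integral>x. (est n x - p)^2 \<partial>M) / \<epsilon>^2"
      by (intro always_eventually allI Chebyshev)
  qed simp
qed

locale reinforced_bernoulli = prob_space M for M :: "'a measure" +
  fixes p :: real and lam :: "nat \<Rightarrow> real" and r :: "nat \<Rightarrow> 'a \<Rightarrow> real"
  assumes p_pos: "0 < p" and p_less_1: "p < 1"
    and lam_1: "lam 1 = 1"
    and lam_antimono: "\<And>n. n > 1 \<Longrightarrow> 0 < lam n \<and> lam n \<le> lam (n - 1)"
    and r_measurable[measurable]: "\<And>i. i \<ge> 1 \<Longrightarrow> r i \<in> borel_measurable M"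
    and r_01: "\<And>i x. i \<ge> 1 \<Longrightarrow> x \<in> space M \<Longrightarrow> r i x \<in> {0, 1}"
    and prob_r_1: "measure M {x \<in> space M. r 1 x = 1} = p"
    and prob_r_cylinder: "\<And>n a. n \<ge> 2 \<Longrightarrow> (\<forall>i\<in>{1..n-1}. a i \<in> {0, 1}) \<Longrightarrow>
           measure M {x \<in> space M. r n x = 1 \<and> (\<forall>i\<in>{1..n-1}. r i x = a i)}
           = (lam n * p + (1 - lam n) * ((\<Sum>i=1..n-1. a i) / real (n - 1)))
             * measure M {x \<in> space M. \<forall>i\<in>{1..n-1}. r i x = a i}"
begin

definition cond_prob :: "nat \<Rightarrow> 'a \<Rightarrow> real" where
  "cond_prob n x = lam n * p + (1 - lam n) * pbar r (n - 1) x"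

definition innovation :: "nat \<Rightarrow> 'a \<Rightarrow> real" where
  "innovation n x = r n x - cond_prob n x"

definition cylinder :: "nat \<Rightarrow> (nat \<Rightarrow> real) \<Rightarrow> 'a set" where
  "cylinder n a = {x \<in> space M. \<forall>i\<in>{1..n-1}. r i x = a i}"

lemma lam_pos_le_1: "n \<ge> 1 \<Longrightarrow> 0 < lam n \<and> lam n \<le> 1"
proof (induction n rule: dec_induct)
  case base
  then show ?case using lam_1 by simp
next
  case (step n)
  then show ?case using lam_antimono[of "Suc n"] by auto
qed

lemma pbar_nonneg_le_1:
  assumes "x \<in> space M"
  shows "0 \<le> pbar r m x \<and> pbar r m x \<le> 1"
proof -
  have "0 \<le> r i x \<and> r i x \<le> 1" if "i \<in> {1..m}" for i
    using r_01[OF _ assms, of i] that by auto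
  then have "0 \<le> (\<Sum>i=1..m. r i x) \<and> (\<Sum>i=1..m. r i x) \<le> real m"
    using sum_mono[of "{1..m}" "\<lambda>i. r i x" "\<lambda>_. 1"] by (auto intro: sum_nonneg)
  then show ?thesis
    by (cases "m = 0") (auto simp: pbar_def)
qed

lemma cond_prob_nonneg_le_1:
  assumes "n \<ge> 1" and "x \<in> space M"
  shows "0 \<le> cond_prob n x \<and> cond_prob n x \<le> 1"
proof -
  have "0 < lam n" "lam n \<le> 1"
    using lam_pos_le_1[OF assms(1)] by auto
  moreover have "0 \<le> pbar r (n - 1) x" "pbar r (n - 1) x \<le> 1"
    using pbar_nonneg_le_1[OF assms(2)] by auto
  ultimately show ?thesis
    unfolding cond_prob_def using p_pos p_less_1 convex_bound_le[of p 1 "pbar r (n - 1) x" "lam n" "1 - lam n"]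
    by (auto intro!: add_nonneg_nonneg)
qed

lemma abs_innovation_le_1: "n \<ge> 1 \<Longrightarrow> x \<in> space M \<Longrightarrow> \<bar>innovation n x\<bar> \<le> 1"
  using cond_prob_nonneg_le_1[of n x] r_01[of n x] unfolding innovation_def by auto

lemma innovation_measurable[measurable]: "n \<ge> 1 \<Longrightarrow> innovation n \<in> borel_measurable M"
  unfolding innovation_def cond_prob_def pbar_def by measurable

lemma integrable_innovation_mult:
  assumes "i \<ge> 1" "j \<ge> 1"
  shows "integrable M (\<lambda>x. innovation i x * innovation j x)"
proof (rule integrable_const_bound[where B = 1])
  show "AE x in M. norm (innovation i x * innovation j x) \<le> 1"
    using assms abs_innovation_le_1 by (intro AE_I2) (simp add: abs_mult mult_le_one)
qed (use assms in measurable)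

lemma integrable_scaled_innovation_mult:
  assumes "i \<ge> 1" "j \<ge> 1"
  shows "integrable M (\<lambda>x. (a * innovation i x) * (b * innovation j x))"
proof -
  have "(\<lambda>x. (a * innovation i x) * (b * innovation j x))
      = (\<lambda>x. (a * b) * (innovation i x * innovation j x))"
    by (simp add: mult_ac)
  then show ?thesis
    using integrable_innovation_mult[OF assms] by simp
qed

lemma integral_square_innovation_le_1:
  assumes "n \<ge> 1"
  shows "(\<integral>x. (innovation n x)^2 \<partial>M) \<le> 1"
proof -
  have "(\<integral>x. (innovation n x)^2 \<partial>M) \<le> (\<integral>x. 1 \<partial>M)"
  proof (rule integral_mono)
    show "integrable M (\<lambda>x. (innovation n x)^2)"
      using integrable_innovation_mult[OF assms assms] by (simp add: power2_eq_square)
    show "(innovation n x)^2 \<le> 1" if "x \<in> space M" for x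
      using abs_innovation_le_1[OF assms that] by (simp add: abs_square_le_1)
  qed simp
  then show ?thesis
    by (simp add: prob_space)
qed

lemma innovation_depends_on_past:
  assumes "i \<ge> 1" and "\<forall>j\<in>{1..i}. r j x = r j y"
  shows "innovation i x = innovation i y"
proof -
  have "(\<Sum>j=1..i-1. r j x) = (\<Sum>j=1..i-1. r j y)"
    using assms(2) by (intro sum.cong) auto
  then show ?thesis
    using assms unfolding innovation_def cond_prob_def pbar_def by simp
qed

lemma rhat_eq_innovation: "i \<ge> 1 \<Longrightarrow> rhat lam r i x = p + innovation i x / lam i"
  using lam_1 lam_pos_le_1[of i]
  by (cases "i = 1") (auto simp: rhat_def innovation_def cond_prob_def field_simps)

lemma phat_minus_p:
  assumes "(\<Sum>i=1..n. w i) \<noteq> 0"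
  shows "phat w lam r n x - p = (\<Sum>i=1..n. w i / lam i * innovation i x) / (\<Sum>i=1..n. w i)"
proof -
  have "(\<Sum>i=1..n. w i * rhat lam r i x) = (\<Sum>i=1..n. p * w i + w i / lam i * innovation i x)"
    by (intro sum.cong refl) (auto simp: rhat_eq_innovation algebra_simps)
  also have "\<dots> = p * (\<Sum>i=1..n. w i) + (\<Sum>i=1..n. w i / lam i * innovation i x)"
    by (simp add: sum.distrib sum_distrib_left)
  finally show ?thesis
    unfolding phat_def using assms by (simp add: field_simps)
qed

lemma sets_cylinder: "cylinder n a \<in> sets M"
  unfolding cylinder_def by measurable

lemma cylinder_partition:
  shows "disjoint_family_on (cylinder n) (\<Pi>\<^sub>E i\<in>{1..n-1}. {0, 1})"
    and "space M \<subseteq> (\<Union>a\<in>\<Pi>\<^sub>E i\<in>{1..n-1}. {0, 1}. cylinder n a)"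
proof -
  show "disjoint_family_on (cylinder n) (\<Pi>\<^sub>E i\<in>{1..n-1}. {0, 1})"
    unfolding disjoint_family_on_def
  proof (intro ballI impI)
    fix a b :: "nat \<Rightarrow> real"
    assume "a \<in> (\<Pi>\<^sub>E i\<in>{1..n-1}. {0, 1})" "b \<in> (\<Pi>\<^sub>E i\<in>{1..n-1}. {0, 1})" "a \<noteq> b"
    then obtain i where "i \<in> {1..n-1}" "a i \<noteq> b i"
      by (meson PiE_ext)
    then show "cylinder n a \<inter> cylinder n b = {}"
      unfolding cylinder_def by auto
  qed
  show "space M \<subseteq> (\<Union>a\<in>\<Pi>\<^sub>E i\<in>{1..n-1}. {0, 1}. cylinder n a)"
  proof
    fix x
    assume "x \<in> space M"
    then have "restrict (\<lambda>i. r i x) {1..n-1} \<in> (\<Pi>\<^sub>E i\<in>{1..n-1}. {0, 1})"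
      and "x \<in> cylinder n (restrict (\<lambda>i. r i x) {1..n-1})"
      using r_01 unfolding cylinder_def by auto
    then show "x \<in> (\<Union>a\<in>\<Pi>\<^sub>E i\<in>{1..n-1}. {0, 1}. cylinder n a)"
      by blast
  qed
qed

lemma cond_prob_cylinder:
  "x \<in> cylinder n a \<Longrightarrow> cond_prob n x = lam n * p + (1 - lam n) * ((\<Sum>i=1..n-1. a i) / real (n - 1))"
  by (simp add: cylinder_def cond_prob_def pbar_def)

lemma prob_success_cylinder:
  assumes "n \<ge> 1" and a: "a \<in> (\<Pi>\<^sub>E i\<in>{1..n-1}. {0, 1})"
  shows "measure M {x \<in> cylinder n a. r n x = 1}
    = (lam n * p + (1 - lam n) * ((\<Sum>i=1..n-1. a i) / real (n - 1))) * measure M (cylinder n a)"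
proof (cases "n = 1")
  case True
  then show ?thesis
    using prob_r_1 lam_1 prob_space by (simp add: cylinder_def)
next
  case False
  then have "n \<ge> 2"
    using \<open>n \<ge> 1\<close> by simp
  moreover have "\<forall>i\<in>{1..n-1}. a i \<in> {0, 1}"
    using a by auto
  moreover have "{x \<in> cylinder n a. r n x = 1} = {x \<in> space M. r n x = 1 \<and> (\<forall>i\<in>{1..n-1}. r i x = a i)}"
    unfolding cylinder_def by auto
  ultimately show ?thesis
    using prob_r_cylinder unfolding cylinder_def by presburger
qed

lemma integral_indicator_cylinder_innovation:
  assumes "n \<ge> 1" and a: "a \<in> (\<Pi>\<^sub>E i\<in>{1..n-1}. {0, 1})"
  shows "(\<integral>x. indicator (cylinder n a) x * innovation n x \<partial>M) = 0"
proof -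
  define q where "q = lam n * p + (1 - lam n) * ((\<Sum>i=1..n-1. a i) / real (n - 1))"
  define B where "B = {x \<in> cylinder n a. r n x = 1}"
  have B: "B \<in> sets M"
    unfolding B_def cylinder_def using \<open>n \<ge> 1\<close> by measurable
  have "indicator (cylinder n a) x * innovation n x = indicator B x - q * indicator (cylinder n a) x"
    if "x \<in> space M" for x
    using r_01[OF \<open>n \<ge> 1\<close> that] cond_prob_cylinder[of x n a]
    by (auto simp: B_def innovation_def q_def indicator_def)
  then have "(\<integral>x. indicator (cylinder n a) x * innovation n x \<partial>M)
      = (\<integral>x. indicator B x - q * indicator (cylinder n a) x \<partial>M)"
    by (intro Bochner_Integration.integral_cong) auto
  also have "\<dots> = measure M B - q * measure M (cylinder n a)"
    using B sets_cylinder[of n a] by (simp add: integrable_real_indicator emeasure_eq_measure)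
  also have "\<dots> = 0"
    using prob_success_cylinder[OF assms] by (simp add: B_def q_def)
  finally show ?thesis .
qed

lemma integral_mult_innovation_eq_0:
  assumes "n \<ge> 1"
    and G: "\<And>x y. x \<in> space M \<Longrightarrow> y \<in> space M \<Longrightarrow> \<forall>i\<in>{1..n-1}. r i x = r i y \<Longrightarrow> G x = G y"
  shows "(\<integral>x. G x * innovation n x \<partial>M) = 0"
proof (rule integral_mult_eq_0_if_blockwise[OF _ sets_cylinder cylinder_partition])
  show "finite (\<Pi>\<^sub>E i\<in>{1..n-1}. {0, 1::real})"
    by (simp add: finite_PiE)
  show "integrable M (innovation n)"
    using abs_innovation_le_1 \<open>n \<ge> 1\<close> by (intro integrable_const_bound[where B = 1] AE_I2) auto
  show "G x = G y" if "x \<in> cylinder n a" "y \<in> cylinder n a" for a x y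
    using that by (intro G) (auto simp: cylinder_def)
  show "(\<integral>x. indicator (cylinder n a) x * innovation n x \<partial>M) = 0"
    if "a \<in> (\<Pi>\<^sub>E i\<in>{1..n-1}. {0, 1})" for a
    using integral_indicator_cylinder_innovation \<open>n \<ge> 1\<close> that .
qed

lemma innovation_orthogonal:
  assumes "1 \<le> i" "i < j"
  shows "(\<integral>x. innovation i x * innovation j x \<partial>M) = 0"
proof (rule integral_mult_innovation_eq_0)
  show "innovation i x = innovation i y" if "\<forall>k\<in>{1..j-1}. r k x = r k y" for x y
    using assms that by (intro innovation_depends_on_past) auto
qed (use assms in simp)

lemma integral_square_weighted_innovations:
  "(\<integral>x. (\<Sum>i=1..n. w i / lam i * innovation i x)^2 \<partial>M) \<le> (\<Sum>i=1..n. (w i / lam i)^2)"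
proof -
  define d where "d i x = w i / lam i * innovation i x" for i x
  have d_mult: "d i x * d j x = (w i / lam i * (w j / lam j)) * (innovation i x * innovation j x)"
    for i j x
    unfolding d_def by (simp add: mult_ac)
  have "(\<integral>x. (\<Sum>i=1..n. d i x)^2 \<partial>M) = (\<Sum>i=1..n. \<integral>x. (d i x)^2 \<partial>M)"
  proof (rule integral_square_sum_orthogonal)
    show "integrable M (\<lambda>x. d i x * d j x)" if "i \<in> {1..n}" "j \<in> {1..n}" for i j
      unfolding d_def using integrable_scaled_innovation_mult that by simp
    show "(\<integral>x. d i x * d j x \<partial>M) = 0" if "i \<in> {1..n}" "j \<in> {1..n}" "i \<noteq> j" for i j
      unfolding d_mult using innovation_orthogonal[of i j] innovation_orthogonal[of j i] that
      by (cases "i < j") (simp_all add: mult.commute)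
  qed simp
  also have "\<dots> = (\<Sum>i=1..n. (w i / lam i)^2 * (\<integral>x. (innovation i x)^2 \<partial>M))"
    unfolding d_def power_mult_distrib by simp
  also have "\<dots> \<le> (\<Sum>i=1..n. (w i / lam i)^2)"
    using integral_square_innovation_le_1 by (intro sum_mono mult_left_le) auto
  finally show ?thesis
    unfolding d_def .
qed

lemma integrable_square_phat: "integrable M (\<lambda>x. (phat w lam r n x - p)^2)"
proof (cases "(\<Sum>i=1..n. w i) = 0")
  case True
  then show ?thesis
    by (simp add: phat_def)
next
  case False
  have "integrable M (\<lambda>x. (\<Sum>i=1..n. w i / lam i * innovation i x)^2)"
    using integrable_scaled_innovation_mult by (intro integrable_square_sum) simp
  then have "integrable M (\<lambda>x. (\<Sum>i=1..n. w i / lam i * innovation i x)^2 / (\<Sum>i=1..n. w i)^2)"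
    by (rule integrable_divide_zero)
  then show ?thesis
    using phat_minus_p[OF False] by (simp add: power_divide)
qed

lemma mean_square_phat_le:
  assumes "(\<Sum>i=1..n. w i) \<noteq> 0"
  shows "(\<integral>x. (phat w lam r n x - p)^2 \<partial>M) \<le> (\<Sum>i=1..n. (w i / lam i)^2) / (\<Sum>i=1..n. w i)^2"
proof -
  have "(\<integral>x. (phat w lam r n x - p)^2 \<partial>M)
      = (\<integral>x. (\<Sum>i=1..n. w i / lam i * innovation i x)^2 \<partial>M) / (\<Sum>i=1..n. w i)^2"
    using phat_minus_p[OF assms] by (simp add: power_divide)
  also have "\<dots> \<le> (\<Sum>i=1..n. (w i / lam i)^2) / (\<Sum>i=1..n. w i)^2"
    by (intro divide_right_mono integral_square_weighted_innovations) simp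
  finally show ?thesis .
qed

lemma consistent_phat:
  assumes "\<And>i. i \<ge> 1 \<Longrightarrow> w i > 0"
    and "(\<lambda>n. (\<Sum>i=1..n. (w i / lam i)^2) / (\<Sum>i=1..n. w i)^2) \<longlonglongrightarrow> 0"
  shows "consistent_estimator M (phat w lam r) p"
proof (rule consistent_estimator_if_mean_square[OF _ integrable_square_phat])
  show "phat w lam r n \<in> borel_measurable M" for n
    unfolding phat_def rhat_def pbar_def by measurable
  have bound: "\<forall>\<^sub>F n in sequentially. (\<integral>x. (phat w lam r n x - p)^2 \<partial>M)
      \<le> (\<Sum>i=1..n. (w i / lam i)^2) / (\<Sum>i=1..n. w i)^2"
  proof (rule eventually_mono[OF eventually_ge_at_top[of 1]])
    fix n :: nat
    assume "n \<ge> 1"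
    then have "(\<Sum>i=1..n. w i) > 0"
      using assms(1) by (intro sum_pos) auto
    then show "(\<integral>x. (phat w lam r n x - p)^2 \<partial>M) \<le> (\<Sum>i=1..n. (w i / lam i)^2) / (\<Sum>i=1..n. w i)^2"
      by (intro mean_square_phat_le) simp
  qed
  show "(\<lambda>n. \<integral>x. (phat w lam r n x - p)^2 \<partial>M) \<longlonglongrightarrow> 0"
  proof (rule tendsto_sandwich[OF _ bound tendsto_const assms(2)])
    show "\<forall>\<^sub>F n in sequentially. 0 \<le> (\<integral>x. (phat w lam r n x - p)^2 \<partial>M)"
      by (intro always_eventually allI integral_nonneg) simp
  qed
qed

lemma consistent_phat_unweighted:
  assumes "(\<lambda>n. \<Sum>i=1..n. 1 / (lam i)^2) \<in> o(\<lambda>n. (real n)^2)"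
  shows "consistent_estimator M (phat (\<lambda>_. 1) lam r) p"
  using smalloD_tendsto[OF assms] by (intro consistent_phat) (simp_all add: power_divide)

lemma consistent_phat_lam_weighted:
  assumes "(\<lambda>n. real n) \<in> o(\<lambda>n. (\<Sum>i=1..n. lam i)^2)"
  shows "consistent_estimator M (phat lam lam r) p"
proof (rule consistent_phat)
  have "(\<Sum>i=1..n. (lam i / lam i)^2) = (\<Sum>i=1..n. 1)" for n
    using lam_pos_le_1 by (intro sum.cong) force+
  then show "(\<lambda>n. (\<Sum>i=1..n. (lam i / lam i)^2) / (\<Sum>i=1..n. lam i)^2) \<longlonglongrightarrow> 0"
    using smalloD_tendsto[OF assms] by simp
qed (use lam_pos_le_1 in simp)

end

theorem corollaryA15:
  fixes M :: "'a measure" and p :: real and lam :: "nat \<Rightarrow> real"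
    and r :: "nat \<Rightarrow> 'a \<Rightarrow> real"
  assumes "prob_space M"
    and "0 < p" "p < 1"
    and "lam 1 = 1"
    and "\<And>n. n > 1 \<Longrightarrow> 0 < lam n \<and> lam n \<le> lam (n - 1)"
    and "\<And>i. i \<ge> 1 \<Longrightarrow> r i \<in> borel_measurable M"
    and "\<And>i x. i \<ge> 1 \<Longrightarrow> x \<in> space M \<Longrightarrow> r i x \<in> {0, 1}"
    and "measure M {x \<in> space M. r 1 x = 1} = p"
    and "\<And>n a. n \<ge> 2 \<Longrightarrow> (\<forall>i\<in>{1..n-1}. a i \<in> {0, 1}) \<Longrightarrow>
           measure M {x \<in> space M. r n x = 1 \<and> (\<forall>i\<in>{1..n-1}. r i x = a i)}
           = (lam n * p + (1 - lam n) * ((\<Sum>i=1..n-1. a i) / real (n - 1)))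
             * measure M {x \<in> space M. \<forall>i\<in>{1..n-1}. r i x = a i}"
  shows "((\<lambda>n. \<Sum>i=1..n. 1 / (lam i)^2) \<in> o(\<lambda>n. (real n)^2)
            \<longrightarrow> consistent_estimator M (phat (\<lambda>_. 1) lam r) p)
       \<and> ((\<lambda>n. real n) \<in> o(\<lambda>n. (\<Sum>i=1..n. lam i)^2)
            \<longrightarrow> consistent_estimator M (phat lam lam r) p)"
proof -
  interpret reinforced_bernoulli M p lam r
    by (intro reinforced_bernoulli.intro reinforced_bernoulli_axioms.intro) (use assms in auto)
  show ?thesis
    using consistent_phat_unweighted consistent_phat_lam_weighted by blast
qed

end
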